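(* Assume the general coarsening setting described in the context, and suppose CAR(GCMP) holds, i.e. $\mathcal{L}^{\psi/\psi_0}_{\mathcal{R}|\mathcal{X}}$ is $\mathcal{O}$-measurable for all $(\theta,\psi)$. Then $$\mathcal{L}^{(\theta,\psi)/(\theta_0,\psi_0)}_{\mathcal{O}}=\mathcal{L}^{\psi/\psi_0}_{\mathcal{R}|\mathcal{X}}\;E_{(\theta_0,\psi_0)}\big(\mathcal{L}^{\theta/\theta_0}_{\mathcal{X}}\,\big|\,\mathcal{O}\big)\quad\text{a.s.},$$ and $E_{(\theta_0,\psi_0)}\big(\mathcal{L}^{\theta/\theta_0}_{\mathcal{X}}\mid\mathcal{O}\big)$ does not depend on $\psi_0$.
   Context: Setting. On a measurable space $(\Omega,\mathcal{F})$ live two càdlàg stochastic processes: $X=(X_t)_{t\ge0}$ with values in $\mathbb{R}^d$ (path space a Skorohod space) and a response indicator process $R=(R_t)_{t\ge0}$ with values in $\{0,1\}$, $R_t=1$ meaning $X_t$ is observed. Let $\mathcal{X}=\sigma(X_t,t\ge0)$, $\mathcal{R}=\sigma(R_t,t\ge0)$, $\mathcal{F}=\mathcal{X}\vee\mathcal{R}$. A model is a family $\{P_{(\theta,\psi)}:(\theta,\psi)\in\Theta\times\Psi\}$ of mutually equivalent probability measures on $\mathcal{F}$ with reference measure $P_{(\theta_0,\psi_0)}$; the restriction of $P_{(\theta,\psi)}$ to $\mathcal{X}$ depends only on $\theta$ (denoted $P_\theta$). Non-informativeness: $P_{(\theta_1,\psi)}(A\mid\mathcal{X})=P_{(\theta_2,\psi)}(A\mid\mathcal{X})$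 a.s. for all $A\in\mathcal{R}$, all $\theta_1,\theta_2,\psi$. For a sub-$\sigma$-field $\mathcal{G}$, $\mathcal{L}^{(\theta,\psi)/(\theta_0,\psi_0)}_{\mathcal{G}}$ is the Radon–Nikodym derivative $dP_{(\theta,\psi)}/dP_{(\theta_0,\psi_0)}$ restricted to $\mathcal{G}$; $\mathcal{L}^{\theta/\theta_0}_{\mathcal{X}}=dP_\theta/dP_{\theta_0}$ on $\mathcal{X}$. The conditional likelihood ratio is $\mathcal{L}_{\mathcal{Y}|\mathcal{G}}=\mathcal{L}_{\mathcal{G}\vee\mathcal{Y}}/\mathcal{L}_{\mathcal{G}}$; by non-informativeness $\mathcal{L}^{(\theta,\psi)/(\theta_0,\psi_0)}_{\mathcal{R}|\mathcal{X}}$ does not depend on $\theta$ and is denoted $\mathcal{L}^{\psi/\psi_0}_{\mathcal{R}|\mathcal{X}}$. The observed $\sigma$-field is $\mathcal{O}=\sigma(R_tX_t,R_t,\ t\ge0)$. *)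

theory Defs
  imports "HOL-Probability.Probability"
begin

definition cadlag :: "(real \<Rightarrow> 'b::topological_space) \<Rightarrow> bool" where
  "cadlag f \<longleftrightarrow> (\<forall>t\<ge>0. (f \<longlongrightarrow> f t) (at_right t) \<and> (t > 0 \<longrightarrow> (\<exists>l. (f \<longlongrightarrow> l) (at_left t))))"

definition proc_sigma :: "'w set \<Rightarrow> (real \<Rightarrow> 'w \<Rightarrow> 'b::topological_space) \<Rightarrow> 'w measure" where
  "proc_sigma \<Omega> Y = sigma \<Omega> (\<Union>t\<in>{0..}. {Y t -` B \<inter> \<Omega> | B. B \<in> sets borel})"

definition join_sigma :: "'w set \<Rightarrow> 'w measure \<Rightarrow> 'w measure \<Rightarrow> 'w measure" where
  "join_sigma \<Omega> G H = sigma \<Omega> (sets G \<union> sets H)"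

text \<open>Likelihood ratio dP/dQ restricted to the sub-sigma-field G.\<close>
definition LR :: "'w measure \<Rightarrow> 'w measure \<Rightarrow> 'w measure \<Rightarrow> 'w \<Rightarrow> ennreal" where
  "LR P Q G = RN_deriv (restr_to_subalg Q G) (restr_to_subalg P G)"

definition cond_LR :: "'w set \<Rightarrow> 'w measure \<Rightarrow> 'w measure \<Rightarrow> 'w measure \<Rightarrow> 'w measure \<Rightarrow> 'w \<Rightarrow> ennreal" where
  "cond_LR \<Omega> P Q Y G = (\<lambda>\<omega>. LR P Q (join_sigma \<Omega> G Y) \<omega> / LR P Q G \<omega>)"

end

(* Write Q for the reference measure and P for P_(theta,psi). On the full sigma-field F = X v R the
   likelihood ratio factors as L_F = L_(R|X) * L_X, and CAR says the first factor is O-measurable.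
   Since O is coarser than F, integrating against O-measurable test functions replaces L_X by
   E_Q(L_X | O), which identifies L_O. For psi-independence, the change of measure from
   P_(theta0,psi0) to P_(theta0,psi1) has F-density L_(R|X) (the X-marginals agree) and so, by
   CAR, an O-measurable density; such a density cancels from Bayes' formula for conditional
   expectations given O. *)
theory Submission
  imports Defs
begin

lemma subalgebra_trans: "subalgebra M F \<Longrightarrow> subalgebra F G \<Longrightarrow> subalgebra M G"
  by (auto simp: subalgebra_def)

lemma LR_borel_measurable: "subalgebra M G \<Longrightarrow> LR N M G \<in> borel_measurable G"
  unfolding LR_def by (metis borel_measurable_RN_deriv measurable_in_subalg')

lemma restr_to_subalg_cong:
  assumes "subalgebra M1 G" "subalgebra M2 G" "\<And>A. A \<in> sets G \<Longrightarrow> emeasure M1 A = emeasure M2 A"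
  shows "restr_to_subalg M1 G = restr_to_subalg M2 G"
  using assms by (intro measure_eqI) (auto simp: sets_restr_to_subalg emeasure_restr_to_subalg)

lemma LR_cong:
  assumes "subalgebra M1 G" "subalgebra M2 G" "\<And>A. A \<in> sets G \<Longrightarrow> emeasure M1 A = emeasure M2 A"
    and "subalgebra N1 G" "subalgebra N2 G" "\<And>A. A \<in> sets G \<Longrightarrow> emeasure N1 A = emeasure N2 A"
  shows "LR N1 M1 G = LR N2 M2 G"
  unfolding LR_def using restr_to_subalg_cong[OF assms(1-3)] restr_to_subalg_cong[OF assms(4-6)] by simp

locale mutually_ac_finite_measures =
  fixes M N :: "'a measure"
  assumes finite_M: "finite_measure M" and finite_N: "finite_measure N"
    and sets_N: "sets N = sets M"
    and ac_MN: "absolutely_continuous M N" and ac_NM: "absolutely_continuous N M"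
begin

lemma subalgebra_N: "subalgebra M G \<Longrightarrow> subalgebra N G"
  using sets_N sets_eq_imp_space_eq[OF sets_N] unfolding subalgebra_def by auto

lemma sigma_finite_subalgebra_M: "subalgebra M G \<Longrightarrow> sigma_finite_subalgebra M G"
  using finite_M
  by (intro finite_measure_subalgebra_is_sigma_finite)
     (simp add: finite_measure_subalgebra_def finite_measure_subalgebra_axioms_def)

lemma sigma_finite_subalgebra_N: "subalgebra M G \<Longrightarrow> sigma_finite_subalgebra N G"
  using finite_N subalgebra_N
  by (intro finite_measure_subalgebra_is_sigma_finite)
     (simp add: finite_measure_subalgebra_def finite_measure_subalgebra_axioms_def)

context
  fixes G :: "'a measure"
  assumes G: "subalgebra M G"
begin

lemma absolutely_continuous_restr_to_subalg: "absolutely_continuous (restr_to_subalg M G) (restr_to_subalg N G)"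
  using ac_MN unfolding absolutely_continuous_def
  by (auto simp: null_sets_restr_to_subalg[OF G] null_sets_restr_to_subalg[OF subalgebra_N[OF G]])

lemma sets_restr_to_subalg_N: "sets (restr_to_subalg N G) = sets (restr_to_subalg M G)"
  by (simp add: sets_restr_to_subalg[OF G] sets_restr_to_subalg[OF subalgebra_N[OF G]])

lemma density_LR: "density (restr_to_subalg M G) (LR N M G) = restr_to_subalg N G"
  unfolding LR_def
  using sigma_finite_subalgebra.sigma_fin_subalg[OF sigma_finite_subalgebra_M[OF G]]
  by (rule sigma_finite_measure.density_RN_deriv
      [OF _ absolutely_continuous_restr_to_subalg sets_restr_to_subalg_N])

lemma nn_integral_LR:
  assumes f: "f \<in> borel_measurable G"
  shows "(\<integral>\<^sup>+x. f x \<partial>N) = (\<integral>\<^sup>+x. LR N M G x * f x \<partial>M)"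
proof -
  have LR: "LR N M G \<in> borel_measurable G" by (rule LR_borel_measurable[OF G])
  have "(\<integral>\<^sup>+x. f x \<partial>N) = (\<integral>\<^sup>+x. f x \<partial>density (restr_to_subalg M G) (LR N M G))"
    using nn_integral_subalgebra2[OF subalgebra_N[OF G] f] by (simp add: density_LR)
  also have "\<dots> = (\<integral>\<^sup>+x. LR N M G x * f x \<partial>restr_to_subalg M G)"
    using LR f by (intro nn_integral_density) (auto simp: measurable_in_subalg[OF G])
  also have "\<dots> = (\<integral>\<^sup>+x. LR N M G x * f x \<partial>M)"
    by (rule nn_integral_subalgebra2[OF G]) (use LR f in measurable)
  finally show ?thesis .
qed

lemma AE_LR_unique:
  assumes f: "f \<in> borel_measurable G"
    and eq: "\<And>A. A \<in> sets G \<Longrightarrow> emeasure N A = (\<integral>\<^sup>+x. f x * indicator A x \<partial>M)"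
  shows "AE x in M. LR N M G x = f x"
proof -
  have fR: "f \<in> borel_measurable (restr_to_subalg M G)"
    using f by (simp add: measurable_in_subalg[OF G])
  have "density (restr_to_subalg M G) f = restr_to_subalg N G"
  proof (rule measure_eqI)
    fix A assume "A \<in> sets (density (restr_to_subalg M G) f)"
    then have A: "A \<in> sets G" by (simp add: sets_restr_to_subalg[OF G])
    have "emeasure (density (restr_to_subalg M G) f) A
        = (\<integral>\<^sup>+x. f x * indicator A x \<partial>restr_to_subalg M G)"
      using A fR by (intro emeasure_density) (simp_all add: sets_restr_to_subalg[OF G])
    also have "\<dots> = (\<integral>\<^sup>+x. f x * indicator A x \<partial>M)"
      by (rule nn_integral_subalgebra2[OF G]) (use f A in measurable)
    finally show "emeasure (density (restr_to_subalg M G) f) A = emeasure (restr_to_subalg N G) A"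
      using eq[OF A] emeasure_restr_to_subalg[OF subalgebra_N[OF G] A] by simp
  qed (simp add: sets_restr_to_subalg_N)
  then have "AE x in restr_to_subalg M G. f x = LR N M G x"
    unfolding LR_def
    by (intro sigma_finite_measure.RN_deriv_unique fR
          sigma_finite_subalgebra.sigma_fin_subalg[OF sigma_finite_subalgebra_M[OF G]])
  then show ?thesis
    by (auto dest: AE_restr_to_subalg[OF G])
qed

lemma AE_LR_finite: "AE x in M. LR N M G x \<noteq> \<infinity>"
  unfolding LR_def
  using sigma_finite_subalgebra.sigma_fin_subalg[OF sigma_finite_subalgebra_M[OF G]]
    sigma_finite_subalgebra.sigma_fin_subalg[OF sigma_finite_subalgebra_N[OF G]]
  by (intro AE_restr_to_subalg[OF G] sigma_finite_measure.RN_deriv_finite absolutely_continuous_restr_to_subalg sets_restr_to_subalg_N)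

lemma AE_LR_nonzero: "AE x in M. LR N M G x \<noteq> 0"
proof -
  let ?Z = "{x\<in>space M. LR N M G x = 0}"
  have "{x\<in>space G. LR N M G x = 0} \<in> sets G"
    using LR_borel_measurable[OF G] by measurable
  then have Z: "?Z \<in> sets G"
    using G by (simp add: subalgebra_def)
  have "emeasure N ?Z = (\<integral>\<^sup>+x. indicator ?Z x \<partial>N)"
    using Z G sets_N by (intro nn_integral_indicator[symmetric]) (auto simp: subalgebra_def)
  also have "\<dots> = (\<integral>\<^sup>+x. LR N M G x * indicator ?Z x \<partial>M)"
    by (rule nn_integral_LR) (use Z in measurable)
  also have "\<dots> = (\<integral>\<^sup>+x. 0 \<partial>M)"
    by (intro nn_integral_cong) (simp add: indicator_def)
  finally have "?Z \<in> null_sets N"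
    using Z G sets_N by (auto simp: subalgebra_def null_sets_def)
  then have "?Z \<in> null_sets M"
    using ac_NM unfolding absolutely_continuous_def by auto
  then show ?thesis
    by (rule AE_I') auto
qed

lemma AE_divide_LR_times: "AE x in M. f x / LR N M G x * LR N M G x = f x"
  using AE_LR_finite AE_LR_nonzero
  by eventually_elim (simp add: ennreal_divide_times top.not_eq_extremum)

lemma AE_LR_eq_1:
  assumes "\<And>A. A \<in> sets G \<Longrightarrow> emeasure N A = emeasure M A"
  shows "AE x in M. LR N M G x = 1"
proof (rule AE_LR_unique)
  fix A assume A: "A \<in> sets G"
  then show "emeasure N A = (\<integral>\<^sup>+x. 1 * indicator A x \<partial>M)"
    using assms[OF A] G by (simp add: subalgebra_def subset_eq)
qed simp

end

lemma AE_LR_eq_times_nn_cond_exp: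
  assumes F: "subalgebra M F" and G: "subalgebra F G"
    and g: "g \<in> borel_measurable G" and h: "h \<in> borel_measurable M"
    and LR_F: "AE x in M. LR N M F x = g x * h x"
  shows "AE x in M. LR N M G x = g x * nn_cond_exp M G h x"
proof -
  have MG: "subalgebra M G"
    using F G by (rule subalgebra_trans)
  interpret sigma_finite_subalgebra M G
    by (rule sigma_finite_subalgebra_M[OF MG])
  show ?thesis
  proof (rule AE_LR_unique[OF MG])
    show "(\<lambda>x. g x * nn_cond_exp M G h x) \<in> borel_measurable G"
      using g by measurable
  next
    fix A assume A: "A \<in> sets G"
    then have AF: "A \<in> sets F"
      using G by (auto simp: subalgebra_def)
    have "emeasure N A = (\<integral>\<^sup>+x. indicator A x \<partial>N)"
      using AF F sets_N by (intro nn_integral_indicator[symmetric]) (auto simp: subalgebra_def)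
    also have "\<dots> = (\<integral>\<^sup>+x. LR N M F x * indicator A x \<partial>M)"
      by (rule nn_integral_LR[OF F]) (use AF in measurable)
    also have "\<dots> = (\<integral>\<^sup>+x. (indicator A x * g x) * h x \<partial>M)"
      using LR_F by (intro nn_integral_cong_AE) (auto simp: ac_simps)
    also have "\<dots> = (\<integral>\<^sup>+x. (indicator A x * g x) * nn_cond_exp M G h x \<partial>M)"
      by (rule nn_cond_exp_intg[symmetric]) (use A g h in measurable)
    finally show "emeasure N A = (\<integral>\<^sup>+x. (g x * nn_cond_exp M G h x) * indicator A x \<partial>M)"
      by (simp add: ac_simps)
  qed
qed

lemma AE_nn_cond_exp_change_of_measure:
  assumes F: "subalgebra M F" and G: "subalgebra F G"
    and k: "k \<in> borel_measurable G" and LR_F: "AE x in M. LR N M F x = k x"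
    and h: "h \<in> borel_measurable F"
  shows "AE x in M. nn_cond_exp N G h x = nn_cond_exp M G h x"
proof -
  have MG: "subalgebra M G"
    using F G by (rule subalgebra_trans)
  interpret M: sigma_finite_subalgebra M G
    by (rule sigma_finite_subalgebra_M[OF MG])
  interpret N: sigma_finite_subalgebra N G
    by (rule sigma_finite_subalgebra_N[OF MG])
  have hM: "h \<in> borel_measurable M" and hN: "h \<in> borel_measurable N"
    using measurable_from_subalg[OF F h] measurable_from_subalg[OF subalgebra_N[OF F] h] .
  have kM: "k \<in> borel_measurable M"
    using measurable_from_subalg[OF MG k] .
  have cond_exp_F: "nn_cond_exp N G h \<in> borel_measurable F"
    using measurable_from_subalg[OF G borel_measurable_nn_cond_exp] .
  have "AE x in M. k x * nn_cond_exp N G h x = nn_cond_exp M G (\<lambda>x. k x * h x) x"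
  proof (rule M.nn_cond_exp_charact)
    fix A assume A: "A \<in> sets G"
    then have AF: "A \<in> sets F"
      using G by (auto simp: subalgebra_def)
    have "(\<integral>\<^sup>+x\<in>A. k x * nn_cond_exp N G h x \<partial>M)
        = (\<integral>\<^sup>+x. LR N M F x * (indicator A x * nn_cond_exp N G h x) \<partial>M)"
      using LR_F by (intro nn_integral_cong_AE) (auto simp: ac_simps)
    also have "\<dots> = (\<integral>\<^sup>+x. indicator A x * nn_cond_exp N G h x \<partial>N)"
      by (rule nn_integral_LR[OF F, symmetric]) (use AF cond_exp_F in measurable)
    also have "\<dots> = (\<integral>\<^sup>+x. indicator A x * h x \<partial>N)"
      by (rule N.nn_cond_exp_intg) (use A hN in measurable)
    also have "\<dots> = (\<integral>\<^sup>+x. LR N M F x * (indicator A x * h x) \<partial>M)"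
      by (rule nn_integral_LR[OF F]) (use AF h in measurable)
    also have "\<dots> = (\<integral>\<^sup>+x\<in>A. k x * h x \<partial>M)"
      using LR_F by (intro nn_integral_cong_AE) (auto simp: ac_simps)
    finally show "(\<integral>\<^sup>+x\<in>A. k x * h x \<partial>M)
        = (\<integral>\<^sup>+x\<in>A. k x * nn_cond_exp N G h x \<partial>M)" ..
  qed (use k kM hM in measurable)
  moreover have "AE x in M. k x * nn_cond_exp M G h x = nn_cond_exp M G (\<lambda>x. k x * h x) x"
    using M.nn_cond_exp_prod[OF k hM] by eventually_elim simp
  moreover have "AE x in M. k x \<noteq> 0 \<and> k x \<noteq> \<infinity>"
    using LR_F AE_LR_nonzero[OF F] AE_LR_finite[OF F] by eventually_elim simp
  ultimately show ?thesis
  proof eventually_elim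
    case (elim x)
    then have "k x * nn_cond_exp N G h x = k x * nn_cond_exp M G h x"
      by simp
    with elim(3) show ?case
      by (simp add: ennreal_mult_cancel_left)
  qed
qed

lemma AE_LR_eq_cond_LR_times_nn_cond_exp:
  assumes F: "subalgebra M F" and X: "subalgebra F X" and G: "subalgebra F G"
    and g: "g \<in> borel_measurable G" and cond_LR: "AE x in M. LR N M F x / LR N M X x = g x"
  shows "AE x in M. LR N M G x = LR N M F x / LR N M X x * nn_cond_exp M G (LR N M X) x"
proof -
  have MX: "subalgebra M X"
    using F X by (rule subalgebra_trans)
  have "AE x in M. LR N M F x = g x * LR N M X x"
    using AE_divide_LR_times[OF MX, of "LR N M F"] cond_LR by eventually_elim simp
  then have "AE x in M. LR N M G x = g x * nn_cond_exp M G (LR N M X) x"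
    using measurable_from_subalg[OF MX LR_borel_measurable[OF MX]]
    by (intro AE_LR_eq_times_nn_cond_exp[OF F G g])
  then show ?thesis
    using cond_LR by eventually_elim simp
qed

lemma AE_nn_cond_exp_eq_if_marginals_agree:
  assumes F: "subalgebra M F" and X: "subalgebra F X" and G: "subalgebra F G"
    and agree: "\<And>A. A \<in> sets X \<Longrightarrow> emeasure N A = emeasure M A"
    and g: "g \<in> borel_measurable G" and cond_LR: "AE x in M. LR N M F x / LR N M X x = g x"
    and h: "h \<in> borel_measurable F"
  shows "AE x in M. nn_cond_exp N G h x = nn_cond_exp M G h x"
proof -
  have MX: "subalgebra M X"
    using F X by (rule subalgebra_trans)
  have "AE x in M. LR N M X x = 1"
    using agree by (rule AE_LR_eq_1[OF MX])
  then have "AE x in M. LR N M F x = g x"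
    using AE_divide_LR_times[OF MX, of "LR N M F"] cond_LR
    by eventually_elim simp
  then show ?thesis
    by (rule AE_nn_cond_exp_change_of_measure[OF F G g _ h])
qed

end

lemma space_proc_sigma [simp]: "space (proc_sigma \<Omega> Y) = \<Omega>"
  unfolding proc_sigma_def by (simp add: space_measure_of_conv)

lemma sets_proc_sigma:
  "sets (proc_sigma \<Omega> Y) = sigma_sets \<Omega> (\<Union>t\<in>{0..}. {Y t -` B \<inter> \<Omega> | B. B \<in> sets borel})"
  unfolding proc_sigma_def by (rule sets_measure_of) auto

lemma measurable_proc_sigma: "t \<ge> 0 \<Longrightarrow> Y t \<in> borel_measurable (proc_sigma \<Omega> Y)"
  unfolding measurable_def by (auto simp: sets_proc_sigma intro!: sigma_sets.Basic)

lemma sets_proc_sigma_subset: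
  assumes "space F = \<Omega>" and "\<And>t. t \<ge> 0 \<Longrightarrow> Y t \<in> borel_measurable F"
  shows "sets (proc_sigma \<Omega> Y) \<subseteq> sets F"
  unfolding sets_proc_sigma assms(1)[symmetric]
  by (rule sets.sigma_sets_subset) (use assms in \<open>auto intro: measurable_sets\<close>)

lemma space_join_sigma [simp]: "space (join_sigma \<Omega> G H) = \<Omega>"
  unfolding join_sigma_def by (simp add: space_measure_of_conv)

lemma sets_join_sigma:
  "space G = \<Omega> \<Longrightarrow> space H = \<Omega> \<Longrightarrow> sets (join_sigma \<Omega> G H) = sigma_sets \<Omega> (sets G \<union> sets H)"
  unfolding join_sigma_def by (rule sets_measure_of) (auto dest: sets.sets_into_space)

lemma subalgebra_join_sigma:
  assumes "space G = \<Omega>" and "space H = \<Omega>"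
  shows "subalgebra (join_sigma \<Omega> G H) G" and "subalgebra (join_sigma \<Omega> G H) H"
  using assms by (auto simp: subalgebra_def sets_join_sigma intro: sigma_sets.Basic)

lemma sets_join_sigma_subset:
  assumes "space F = \<Omega>" "space G = \<Omega>" "space H = \<Omega>" and "sets G \<subseteq> sets F" "sets H \<subseteq> sets F"
  shows "sets (join_sigma \<Omega> G H) \<subseteq> sets F"
  using sets.sigma_sets_subset[of "sets G \<union> sets H" F] assms by (simp add: sets_join_sigma)

lemma subalgebra_observed_sigma:
  fixes X :: "real \<Rightarrow> 'w \<Rightarrow> 'a::{second_countable_topology, real_normed_vector}"
    and R :: "real \<Rightarrow> 'w \<Rightarrow> real"
  shows "subalgebra (join_sigma \<Omega> (proc_sigma \<Omega> X) (proc_sigma \<Omega> R))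
           (join_sigma \<Omega> (proc_sigma \<Omega> (\<lambda>t \<omega>. R t \<omega> *\<^sub>R X t \<omega>)) (proc_sigma \<Omega> R))"
    (is "subalgebra ?F _")
proof -
  note sub = subalgebra_join_sigma[OF space_proc_sigma space_proc_sigma, of \<Omega> X R]
  have X: "X t \<in> borel_measurable ?F" and R: "R t \<in> borel_measurable ?F" if "t \<ge> 0" for t
    using measurable_from_subalg[OF sub(1) measurable_proc_sigma[OF that]]
      measurable_from_subalg[OF sub(2) measurable_proc_sigma[OF that]] .
  have "sets (proc_sigma \<Omega> (\<lambda>t \<omega>. R t \<omega> *\<^sub>R X t \<omega>)) \<subseteq> sets ?F"
    by (rule sets_proc_sigma_subset) (use X R in measurable)
  moreover have "sets (proc_sigma \<Omega> R) \<subseteq> sets ?F"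
    using sub(2) by (simp add: subalgebra_def)
  ultimately show ?thesis
    unfolding subalgebra_def by (simp add: sets_join_sigma_subset)
qed

theorem theorem2:
  fixes \<Omega> :: "'w set"
    and X :: "real \<Rightarrow> 'w \<Rightarrow> real ^ 'd"
    and R :: "real \<Rightarrow> 'w \<Rightarrow> real"
    and P :: "'th \<Rightarrow> 'ps \<Rightarrow> 'w measure"
    and \<Theta> :: "'th set" and \<Psi> :: "'ps set"
    and \<theta>0 :: 'th and \<psi>0 :: 'ps
  defines "\<X> \<equiv> proc_sigma \<Omega> X"
    and "\<R> \<equiv> proc_sigma \<Omega> R"
    and "\<F> \<equiv> join_sigma \<Omega> (proc_sigma \<Omega> X) (proc_sigma \<Omega> R)"
    and "\<O> \<equiv> join_sigma \<Omega> (proc_sigma \<Omega> (\<lambda>t \<omega>. R t \<omega> *\<^sub>R X t \<omega>)) (proc_sigma \<Omega> R)"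
  assumes cadlag_X: "\<forall>\<omega>\<in>\<Omega>. cadlag (\<lambda>t. X t \<omega>)"
    and cadlag_R: "\<forall>\<omega>\<in>\<Omega>. cadlag (\<lambda>t. R t \<omega>)"
    and R_01: "\<forall>t\<ge>0. \<forall>\<omega>\<in>\<Omega>. R t \<omega> \<in> {0, 1}"
    and ref: "\<theta>0 \<in> \<Theta>" "\<psi>0 \<in> \<Psi>"
    and prob: "\<forall>\<theta>\<in>\<Theta>. \<forall>\<psi>\<in>\<Psi>. prob_space (P \<theta> \<psi>) \<and> space (P \<theta> \<psi>) = \<Omega> \<and> sets (P \<theta> \<psi>) = sets \<F>"
    and equiv: "\<forall>\<theta>1\<in>\<Theta>. \<forall>\<psi>1\<in>\<Psi>. \<forall>\<theta>2\<in>\<Theta>. \<forall>\<psi>2\<in>\<Psi>.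
                  absolutely_continuous (P \<theta>1 \<psi>1) (P \<theta>2 \<psi>2)"
    and X_marg: "\<forall>\<theta>\<in>\<Theta>. \<forall>\<psi>1\<in>\<Psi>. \<forall>\<psi>2\<in>\<Psi>. \<forall>A\<in>sets \<X>.
                  emeasure (P \<theta> \<psi>1) A = emeasure (P \<theta> \<psi>2) A"
    and noninf: "\<forall>\<theta>1\<in>\<Theta>. \<forall>\<theta>2\<in>\<Theta>. \<forall>\<psi>\<in>\<Psi>. \<forall>A\<in>sets \<R>.
                  AE \<omega> in P \<theta>1 \<psi>. real_cond_exp (P \<theta>1 \<psi>) \<X> (indicator A) \<omega>
                                   = real_cond_exp (P \<theta>2 \<psi>) \<X> (indicator A) \<omega>"
    and CAR: "\<forall>\<theta>\<in>\<Theta>. \<forall>\<psi>\<in>\<Psi>. \<exists>g \<in> borel_measurable \<O>.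
                  AE \<omega> in P \<theta>0 \<psi>0. cond_LR \<Omega> (P \<theta> \<psi>) (P \<theta>0 \<psi>0) \<R> \<X> \<omega> = g \<omega>"
    and par: "\<theta> \<in> \<Theta>" "\<psi> \<in> \<Psi>"
  shows "(AE \<omega> in P \<theta>0 \<psi>0.
            LR (P \<theta> \<psi>) (P \<theta>0 \<psi>0) \<O> \<omega>
              = cond_LR \<Omega> (P \<theta> \<psi>) (P \<theta>0 \<psi>0) \<R> \<X> \<omega>
                * nn_cond_exp (P \<theta>0 \<psi>0) \<O> (LR (P \<theta> \<psi>0) (P \<theta>0 \<psi>0) \<X>) \<omega>)
       \<and> (\<forall>\<psi>1\<in>\<Psi>. AE \<omega> in P \<theta>0 \<psi>0.
            nn_cond_exp (P \<theta>0 \<psi>1) \<O> (LR (P \<theta> \<psi>1) (P \<theta>0 \<psi>1) \<X>) \<omega>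
              = nn_cond_exp (P \<theta>0 \<psi>0) \<O> (LR (P \<theta> \<psi>0) (P \<theta>0 \<psi>0) \<X>) \<omega>)"
proof -
  note defs = \<open>\<X> \<equiv> proc_sigma \<Omega> X\<close> \<open>\<R> \<equiv> proc_sigma \<Omega> R\<close>
    \<open>\<F> \<equiv> join_sigma \<Omega> (proc_sigma \<Omega> X) (proc_sigma \<Omega> R)\<close>
    \<open>\<O> \<equiv> join_sigma \<Omega> (proc_sigma \<Omega> (\<lambda>t \<omega>. R t \<omega> *\<^sub>R X t \<omega>)) (proc_sigma \<Omega> R)\<close>
  have sub_X: "subalgebra \<F> \<X>" and sub_O: "subalgebra \<F> \<O>"
    unfolding defs by (simp_all add: subalgebra_join_sigma subalgebra_observed_sigma)
  have sub_F: "subalgebra (P a b) \<F>" if "a \<in> \<Theta>" "b \<in> \<Psi>" for a b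
    using prob that unfolding defs by (simp add: subalgebra_def)
  have mutually_ac: "mutually_ac_finite_measures (P a b) (P a' b')"
    if "a \<in> \<Theta>" "b \<in> \<Psi>" "a' \<in> \<Theta>" "b' \<in> \<Psi>" for a b a' b'
    using prob equiv that by (simp add: mutually_ac_finite_measures_def prob_space.finite_measure)
  have sub_PX: "subalgebra (P a b) \<X>" if "a \<in> \<Theta>" "b \<in> \<Psi>" for a b
    using sub_F[OF that] sub_X by (rule subalgebra_trans)
  have LR_X: "LR (P \<theta> b) (P \<theta>0 c) \<X> = LR (P \<theta> \<psi>0) (P \<theta>0 \<psi>0) \<X>"
    if "b \<in> \<Psi>" "c \<in> \<Psi>" for b c
    by (intro LR_cong sub_PX ref par that X_marg[rule_format, OF ref(1) that(2) ref(2)]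
          X_marg[rule_format, OF par(1) that(1) ref(2)])
  have LR_X_measurable: "LR (P \<theta> \<psi>0) (P \<theta>0 \<psi>0) \<X> \<in> borel_measurable \<F>"
    using measurable_from_subalg[OF sub_X LR_borel_measurable[OF sub_PX[OF ref]]] .
  have cond_LR: "cond_LR \<Omega> N M \<R> \<X> = (\<lambda>\<omega>. LR N M \<F> \<omega> / LR N M \<X> \<omega>)" for N M
    unfolding cond_LR_def defs ..
  show ?thesis
  proof (intro conjI ballI)
    obtain g where g: "g \<in> borel_measurable \<O>"
      "AE \<omega> in P \<theta>0 \<psi>0. LR (P \<theta> \<psi>) (P \<theta>0 \<psi>0) \<F> \<omega> / LR (P \<theta> \<psi>) (P \<theta>0 \<psi>0) \<X> \<omega> = g \<omega>"
      using CAR par unfolding cond_LR by blast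
    interpret mutually_ac_finite_measures "P \<theta>0 \<psi>0" "P \<theta> \<psi>"
      using mutually_ac[OF ref par] .
    show "AE \<omega> in P \<theta>0 \<psi>0. LR (P \<theta> \<psi>) (P \<theta>0 \<psi>0) \<O> \<omega> = cond_LR \<Omega> (P \<theta> \<psi>) (P \<theta>0 \<psi>0) \<R> \<X> \<omega>
        * nn_cond_exp (P \<theta>0 \<psi>0) \<O> (LR (P \<theta> \<psi>0) (P \<theta>0 \<psi>0) \<X>) \<omega>"
      using AE_LR_eq_cond_LR_times_nn_cond_exp[OF sub_F[OF ref] sub_X sub_O g]
        LR_X[OF par(2) ref(2)]
      unfolding cond_LR by simp
  next
    fix \<psi>1 assume \<psi>1: "\<psi>1 \<in> \<Psi>"
    obtain g1 where g1: "g1 \<in> borel_measurable \<O>"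
      "AE \<omega> in P \<theta>0 \<psi>0. LR (P \<theta>0 \<psi>1) (P \<theta>0 \<psi>0) \<F> \<omega> / LR (P \<theta>0 \<psi>1) (P \<theta>0 \<psi>0) \<X> \<omega> = g1 \<omega>"
      using CAR ref(1) \<psi>1 unfolding cond_LR by blast
    interpret mutually_ac_finite_measures "P \<theta>0 \<psi>0" "P \<theta>0 \<psi>1"
      using mutually_ac[OF ref ref(1) \<psi>1] .
    show "AE \<omega> in P \<theta>0 \<psi>0. nn_cond_exp (P \<theta>0 \<psi>1) \<O> (LR (P \<theta> \<psi>1) (P \<theta>0 \<psi>1) \<X>) \<omega>
        = nn_cond_exp (P \<theta>0 \<psi>0) \<O> (LR (P \<theta> \<psi>0) (P \<theta>0 \<psi>0) \<X>) \<omega>"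
      unfolding LR_X[OF \<psi>1 \<psi>1]
      by (intro AE_nn_cond_exp_eq_if_marginals_agree[OF sub_F[OF ref] sub_X sub_O _ g1]
          LR_X_measurable X_marg[rule_format, OF ref(1) \<psi>1 ref(2)])
  qed
qed

end
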